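(* For all $Y,Z\in\mathbb{N}^\mathbb{N}$, the following are equivalent: (1) $Y=\mathcal{J}^\omega(Z)$; (2) for every $n$ there exists a finite string $\sigma_n\subset Z$ with $|\sigma_n|>n$ such that $Y\restriction n=J^\omega(\sigma_n)$.
   Context: Strings are coded by natural numbers via a fixed computable coding with $\sigma\subsetneq\tau$ implying code$(\sigma)<$ code$(\tau)$. For $\sigma$ finite or infinite, $\{e\}^\sigma_t(n)\downarrow$ means the $e$-th machine on input $n$ with oracle $\sigma$ halts in fewer than $\min(|\sigma|,t)$ steps. For $Z\in\mathbb{N}^\mathbb{N}$: $t_{-1}=1$, $t_n=\max\{t_{n-1}+1,\mu t(\{n\}^Z_t(n)\downarrow)\}$ ($t_n=t_{n-1}+1$ if no such $t$), $\mathcal{J}(Z)(n)=Z\restriction t_n$, and $\mathcal{J}^\omega(Z)(n)=\mathcal{J}^{n+1}(Z)(0)$. For finite $\sigma$: $t_{-1}=1$, $t_n=\max\{t_{n-1}+1,\mu t(\{n\}^{\sigma\restriction t}(n)\downarrow)\}$ ($t_n=t_{n-1}+1$ if no such $t$), $J(\sigma)=\langle\sigma\restriction t_0,\dots,\sigma\restriction t_{k-1}\rangle$ with $k$ least such that $t_k>|\sigma|$; $J^m$ is the $m$-fold iterate (entries of strings being codes of strings); and $J^\omega(\sigma)=\langle J(\sigma)(0),J^2(\sigma)(0),\dots,J^{n-1}(\sigma)(0)\rangle$ where $n$ is least with $J^n(\sigma)=\emptyset$. *)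

theory Defs
  imports Main "HOL-Library.Sublist"
begin

text \<open>
  Abstract model of the fixed coding of strings and of the oracle machines.
  code: the coding of strings (nat lists) by naturals.
  H e n f s: the e-th machine on input n with oracle f halts in fewer than s steps.
\<close>

definition oracle_model ::
  "(nat list \<Rightarrow> nat) \<Rightarrow> (nat \<Rightarrow> nat \<Rightarrow> (nat \<Rightarrow> nat) \<Rightarrow> nat \<Rightarrow> bool) \<Rightarrow> bool" where
  "oracle_model code H \<longleftrightarrow>
     inj code \<and>
     (\<forall>\<sigma> \<tau>. strict_prefix \<sigma> \<tau> \<longrightarrow> code \<sigma> < code \<tau>) \<and>
     (\<forall>e n f g s. (\<forall>i<s. f i = g i) \<longrightarrow> H e n f s = H e n g s) \<and>
     (\<forall>e n f s s'. H e n f s \<and> s \<le> s' \<longrightarrow> H e n f s') \<and>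
     (\<forall>e n f. \<not> H e n f 0)"

definition restr :: "(nat \<Rightarrow> nat) \<Rightarrow> nat \<Rightarrow> nat list" where
  "restr Z t = map Z [0..<t]"

text \<open>Extension of a finite string by zeros (irrelevant by the use principle).\<close>
definition ext :: "nat list \<Rightarrow> nat \<Rightarrow> nat" where
  "ext \<sigma> i = (if i < length \<sigma> then \<sigma> ! i else 0)"

definition stepT :: "nat \<Rightarrow> (nat \<Rightarrow> bool) \<Rightarrow> nat" where
  "stepT p P = (if \<exists>t. P t then max (Suc p) (LEAST t. P t) else Suc p)"

text \<open>Infinite case: {n}^Z_t(n) halts iff H n n Z t.\<close>
primrec tZ :: "(nat \<Rightarrow> nat \<Rightarrow> (nat \<Rightarrow> nat) \<Rightarrow> nat \<Rightarrow> bool) \<Rightarrow> (nat \<Rightarrow> nat) \<Rightarrow> nat \<Rightarrow> nat" where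
  "tZ H Z 0 = stepT 1 (\<lambda>t. H 0 0 Z t)"
| "tZ H Z (Suc n) = stepT (tZ H Z n) (\<lambda>t. H (Suc n) (Suc n) Z t)"

definition JZ :: "(nat list \<Rightarrow> nat) \<Rightarrow> (nat \<Rightarrow> nat \<Rightarrow> (nat \<Rightarrow> nat) \<Rightarrow> nat \<Rightarrow> bool)
    \<Rightarrow> (nat \<Rightarrow> nat) \<Rightarrow> (nat \<Rightarrow> nat)" where
  "JZ code H Z n = code (restr Z (tZ H Z n))"

definition JZomega :: "(nat list \<Rightarrow> nat) \<Rightarrow> (nat \<Rightarrow> nat \<Rightarrow> (nat \<Rightarrow> nat) \<Rightarrow> nat \<Rightarrow> bool)
    \<Rightarrow> (nat \<Rightarrow> nat) \<Rightarrow> (nat \<Rightarrow> nat)" where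
  "JZomega code H Z n = ((JZ code H) ^^ (Suc n)) Z 0"

text \<open>Finite case: {e}^\<sigma>(n) halts iff it halts in fewer than |\<sigma>| steps.\<close>
definition haltsF :: "(nat \<Rightarrow> nat \<Rightarrow> (nat \<Rightarrow> nat) \<Rightarrow> nat \<Rightarrow> bool) \<Rightarrow> nat \<Rightarrow> nat list \<Rightarrow> nat \<Rightarrow> bool" where
  "haltsF H e \<sigma> n = H e n (ext \<sigma>) (length \<sigma>)"

primrec tF :: "(nat \<Rightarrow> nat \<Rightarrow> (nat \<Rightarrow> nat) \<Rightarrow> nat \<Rightarrow> bool) \<Rightarrow> nat list \<Rightarrow> nat \<Rightarrow> nat" where
  "tF H \<sigma> 0 = stepT 1 (\<lambda>t. haltsF H 0 (take t \<sigma>) 0)"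
| "tF H \<sigma> (Suc n) = stepT (tF H \<sigma> n) (\<lambda>t. haltsF H (Suc n) (take t \<sigma>) (Suc n))"

definition Jfin :: "(nat list \<Rightarrow> nat) \<Rightarrow> (nat \<Rightarrow> nat \<Rightarrow> (nat \<Rightarrow> nat) \<Rightarrow> nat \<Rightarrow> bool)
    \<Rightarrow> nat list \<Rightarrow> nat list" where
  "Jfin code H \<sigma> =
     map (\<lambda>i. code (take (tF H \<sigma> i) \<sigma>)) [0..<(LEAST k. tF H \<sigma> k > length \<sigma>)]"

definition Jfinomega :: "(nat list \<Rightarrow> nat) \<Rightarrow> (nat \<Rightarrow> nat \<Rightarrow> (nat \<Rightarrow> nat) \<Rightarrow> nat \<Rightarrow> bool)
    \<Rightarrow> nat list \<Rightarrow> nat list" where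
  "Jfinomega code H \<sigma> =
     map (\<lambda>i. ((Jfin code H) ^^ (Suc i)) \<sigma> ! 0)
       [0..<(LEAST n. ((Jfin code H) ^^ n) \<sigma> = []) - 1]"

end

theory Submission
  imports Defs
begin

text \<open>
  By the use principle, the finite computation of the t-sequence on a prefix \<open>\<tau>\<close> of \<open>X\<close>
  agrees with the infinite one as long as the latter stays inside \<open>\<tau>\<close>; in particular
  \<open>J(X\<restriction>t\<^sub>j) = \<J>(X)\<restriction>(j+1)\<close>. Choosing the prefix lengths backwards, one finds a prefix of
  \<open>Z\<close> whose successive \<open>J\<close>-images are prefixes of the successive jumps of \<open>Z\<close>, the
  \<open>(n+1)\<close>-st of length one, which gives (2). Conversely, \<open>J(\<tau>)(i)\<close> is the code of a prefix
  of \<open>\<tau>\<close> of length greater than \<open>i+1\<close>, so by injectivity of the coding the agreement of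
  the first entries of the iterates \<open>J\<^sup>m(\<sigma>\<^sub>n)\<close> spreads to longer and longer initial
  segments. Comparing \<open>\<sigma>\<^sub>n\<close> with \<open>\<sigma>\<^sub>n\<^sub>'\<close> for \<open>n'\<close> large, where the finite t-sequence can no
  longer overshoot, one shows by induction on \<open>m\<close> that \<open>J\<^sup>m(\<sigma>\<^sub>n)\<close> is an initial segment of
  \<open>\<J>\<^sup>m(Z)\<close> on its first \<open>n - m\<close> positions.
\<close>

lemma length_restr [simp]: "length (restr Z t) = t"
  by (simp add: restr_def)

lemma nth_restr [simp]: "k < t \<Longrightarrow> restr Z t ! k = Z k"
  by (simp add: restr_def)

lemma take_restr: "s \<le> t \<Longrightarrow> take s (restr Z t) = restr Z s"
  by (simp add: restr_def take_map min_def)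

lemma restr_eqI: "\<lbrakk>t \<le> length \<tau>; \<forall>k<t. \<tau> ! k = X k\<rbrakk> \<Longrightarrow> take t \<tau> = restr X t"
  by (intro nth_equalityI) auto

lemma oracle_model_use:
  "\<lbrakk>oracle_model code H; \<forall>k<t. f k = g k\<rbrakk> \<Longrightarrow> H e n f t = H e n g t"
  unfolding oracle_model_def by blast

lemma oracle_model_inj: "oracle_model code H \<Longrightarrow> inj code"
  by (simp add: oracle_model_def)

lemma Suc_le_stepT: "Suc p \<le> stepT p P"
  by (simp add: stepT_def)

lemma tZ_ge: "i + 2 \<le> tZ H X i"
proof (induction i)
  case (Suc i)
  then show ?case using Suc_le_stepT[of "tZ H X i" "H (Suc i) (Suc i) X"] by simp
qed (use Suc_le_stepT[of 1] in simp)

lemma tZ_less_Suc: "tZ H X i < tZ H X (Suc i)"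
  using Suc_le_stepT[of "tZ H X i" "H (Suc i) (Suc i) X"] by simp

lemma tZ_mono: "i \<le> j \<Longrightarrow> tZ H X i \<le> tZ H X j"
  by (rule lift_Suc_mono_le) (use tZ_less_Suc in \<open>auto intro: less_imp_le\<close>)

lemma tF_ge: "i + 2 \<le> tF H \<tau> i"
proof (induction i)
  case (Suc i)
  then show ?case
    using Suc_le_stepT[of "tF H \<tau> i" "\<lambda>t. haltsF H (Suc i) (take t \<tau>) (Suc i)"] by simp
qed (use Suc_le_stepT[of 1] in simp)

lemma tF_less_Suc: "tF H \<tau> i < tF H \<tau> (Suc i)"
  using Suc_le_stepT[of "tF H \<tau> i" "\<lambda>t. haltsF H (Suc i) (take t \<tau>) (Suc i)"] by simp

lemma stepT_agree_upto:
  assumes agree: "\<forall>t\<le>A. P t = Q t" and le: "stepT p Q \<le> A"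
  shows "stepT p P = stepT p Q \<or> (A < stepT p P \<and> (\<exists>t>A. P t) \<and> (\<forall>t. \<not> Q t))"
proof (cases "\<exists>t. Q t")
  case True
  define w where "w = (LEAST t. Q t)"
  have "Q w" "w \<le> A"
    using True le LeastI_ex[of Q] by (auto simp: stepT_def w_def)
  have "P w" using \<open>Q w\<close> \<open>w \<le> A\<close> agree by auto
  have "(LEAST t. P t) = w"
  proof (rule Least_equality)
    show "P w" by fact
    show "w \<le> y" if "P y" for y
    proof (rule ccontr)
      assume "\<not> w \<le> y"
      with that agree \<open>w \<le> A\<close> have "y < w" "Q y" by auto
      then show False using not_less_Least unfolding w_def by blast
    qed
  qed
  with True \<open>P w\<close> show ?thesis by (auto simp: stepT_def w_def)
next
  case noQ: False
  show ?thesis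
  proof (cases "\<exists>t. P t")
    case True
    have "A < (LEAST t. P t)"
      using LeastI_ex[OF True] agree noQ by (metis not_less)
    with True noQ LeastI_ex[OF True] show ?thesis by (auto simp: stepT_def)
  qed (use noQ in \<open>simp add: stepT_def\<close>)
qed

text \<open>
  A string \<open>\<tau>\<close> agreeing with \<open>X\<close> below \<open>A \<le> |\<tau>|\<close> reproduces the t-sequence of \<open>X\<close> up
  to \<open>A\<close>, except that it may halt late, which is only possible when \<open>\<tau>\<close> is longer than \<open>A\<close>:
  halting on \<open>\<tau>\<restriction>t\<close> is the same for all \<open>t \<ge> |\<tau>|\<close>.
\<close>

lemma stepT_prefix_agree:
  assumes om: "oracle_model code H" and A: "A \<le> length \<tau>" "\<forall>k<A. \<tau> ! k = X k"
    and le: "stepT p (H e n X) \<le> A"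
  shows "stepT p (\<lambda>t. haltsF H e (take t \<tau>) n) = stepT p (H e n X)
     \<or> (A < stepT p (\<lambda>t. haltsF H e (take t \<tau>) n) \<and> A < length \<tau>)"
proof -
  have agree: "\<forall>t\<le>A. haltsF H e (take t \<tau>) n = H e n X t"
  proof (intro allI impI)
    fix t assume "t \<le> A"
    then have "length (take t \<tau>) = t" "\<forall>k<t. ext (take t \<tau>) k = X k"
      using A by (auto simp: ext_def)
    then show "haltsF H e (take t \<tau>) n = H e n X t"
      unfolding haltsF_def using oracle_model_use[OF om] by metis
  qed
  from stepT_agree_upto[OF agree le] show ?thesis
  proof
    assume late: "A < stepT p (\<lambda>t. haltsF H e (take t \<tau>) n)
      \<and> (\<exists>t>A. haltsF H e (take t \<tau>) n) \<and> (\<forall>t. \<not> H e n X t)"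
    then obtain t where "t > A" "haltsF H e (take t \<tau>) n" by blast
    moreover have "take t \<tau> = take A \<tau>" if "A = length \<tau>"
      using that \<open>t > A\<close> by simp
    ultimately have "A < length \<tau>"
      using A(1) agree late by (metis order_refl le_neq_implies_less)
    with late show ?thesis by blast
  qed simp
qed

lemma tF_eq_tZ_or_late:
  assumes om: "oracle_model code H" and A: "A \<le> length \<tau>" "\<forall>k<A. \<tau> ! k = X k"
  shows "tZ H X i \<le> A \<Longrightarrow> tF H \<tau> i = tZ H X i \<or> (A < tF H \<tau> i \<and> A < length \<tau>)"
proof (induction i)
  case 0
  then show ?case using stepT_prefix_agree[OF om A, of 1 0 0] by simp
next
  case (Suc i)
  have "tZ H X i \<le> A" using Suc.prems tZ_less_Suc[of H X i] by simp
  with Suc.IH consider "tF H \<tau> i = tZ H X i" | "A < tF H \<tau> i \<and> A < length \<tau>" by blast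
  then show ?case
  proof cases
    case 1
    then show ?thesis
      using stepT_prefix_agree[OF om A, of "tZ H X i" "Suc i" "Suc i"] Suc.prems by simp
  next
    case 2
    then show ?thesis using tF_less_Suc[of H \<tau> i] by simp
  qed
qed

lemma length_Jfin: "length (Jfin code H \<tau>) = (LEAST k. length \<tau> < tF H \<tau> k)"
  by (simp add: Jfin_def)

lemma nth_Jfin: "i < length (Jfin code H \<tau>) \<Longrightarrow> Jfin code H \<tau> ! i = code (take (tF H \<tau> i) \<tau>)"
  by (simp add: Jfin_def)

lemma tF_le_length: "i < length (Jfin code H \<tau>) \<Longrightarrow> tF H \<tau> i \<le> length \<tau>"
  unfolding length_Jfin using not_less_Least by (metis not_le)

lemma length_Jfin_le: "length (Jfin code H \<tau>) \<le> length \<tau> - 1"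
  unfolding length_Jfin using tF_ge[of "length \<tau> - 1" H \<tau>] by (intro Least_le) linarith

lemma Jfin_restr_tZ:
  assumes om: "oracle_model code H"
  shows "Jfin code H (restr X (tZ H X j)) = restr (JZ code H X) (Suc j)"
    (is "Jfin code H ?\<tau> = _")
proof -
  have tF_eq: "tF H ?\<tau> i = tZ H X i" if "i \<le> j" for i
    using tF_eq_tZ_or_late[OF om, of "tZ H X j" ?\<tau> X i] tZ_mono[OF that]
    by auto
  have len: "(LEAST k. tZ H X j < tF H ?\<tau> k) = Suc j"
  proof (rule Least_equality)
    show "tZ H X j < tF H ?\<tau> (Suc j)" using tF_eq[of j] tF_less_Suc[of H ?\<tau> j] by simp
    show "Suc j \<le> y" if "tZ H X j < tF H ?\<tau> y" for y
    proof (rule ccontr)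
      assume "\<not> Suc j \<le> y"
      then have "y \<le> j" by simp
      then have "tF H ?\<tau> y \<le> length ?\<tau>" using tF_eq tZ_mono by simp
      with that show False by simp
    qed
  qed
  show ?thesis
  proof (rule nth_equalityI)
    show "length (Jfin code H ?\<tau>) = length (restr (JZ code H X) (Suc j))"
      by (simp add: length_Jfin len)
  next
    fix i assume "i < length (Jfin code H ?\<tau>)"
    then have "i \<le> j" by (simp add: length_Jfin len)
    then show "Jfin code H ?\<tau> ! i = restr (JZ code H X) (Suc j) ! i"
      using tF_eq[of i] tZ_mono[OF \<open>i \<le> j\<close>]
      by (simp add: nth_Jfin length_Jfin len take_restr JZ_def)
  qed
qed

lemma Jfin_nth_eq_imp_take_eq:
  assumes "inj code" "i < length (Jfin code H \<tau>)" "i < length (Jfin code H \<tau>')"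
    and "Jfin code H \<tau> ! i = Jfin code H \<tau>' ! i"
  shows "take (tF H \<tau> i) \<tau> = take (tF H \<tau>' i) \<tau>'"
  using assms by (simp add: nth_Jfin inj_eq)

lemma Jfin_nth_eq_imp_nth_eq:
  assumes inj: "inj code" and i: "i < length (Jfin code H \<tau>)" "i < length (Jfin code H \<tau>')"
    and eq: "Jfin code H \<tau> ! i = Jfin code H \<tau>' ! i" and j: "j \<le> Suc i"
  shows "j < length \<tau> \<and> j < length \<tau>' \<and> \<tau> ! j = \<tau>' ! j"
proof -
  have take_eq: "take (tF H \<tau> i) \<tau> = take (tF H \<tau>' i) \<tau>'"
    using Jfin_nth_eq_imp_take_eq[OF inj i eq] .
  have "j < tF H \<tau> i" "j < tF H \<tau>' i" "tF H \<tau> i \<le> length \<tau>" "tF H \<tau>' i \<le> length \<tau>'"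
    using tF_ge[of i H \<tau>] tF_ge[of i H \<tau>'] tF_le_length i j by auto
  then show ?thesis using nth_take[of j "tF H \<tau> i" \<tau>] nth_take[of j "tF H \<tau>' i" \<tau>'] take_eq
    by simp
qed

text \<open>The step \<open>(2) \<Longrightarrow> (1)\<close> at a single level, with \<open>\<tau>'\<close> a much longer approximation than \<open>\<tau>\<close>.\<close>

lemma Jfin_nth_eq_JZ:
  assumes om: "oracle_model code H"
    and agree: "A \<le> length \<tau>'" "\<forall>k<A. \<tau>' ! k = X k"
    and j: "j < length (Jfin code H \<tau>)" "j < length (Jfin code H \<tau>')"
    and eq: "Jfin code H \<tau> ! j = Jfin code H \<tau>' ! j"
    and long: "length \<tau> < A" "tZ H X j \<le> A"
  shows "Jfin code H \<tau>' ! j = JZ code H X j"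
proof -
  have "length (take (tF H \<tau> j) \<tau>) = length (take (tF H \<tau>' j) \<tau>')"
    using Jfin_nth_eq_imp_take_eq[OF oracle_model_inj[OF om] j eq] by simp
  then have "tF H \<tau> j = tF H \<tau>' j"
    using tF_le_length[OF j(1)] tF_le_length[OF j(2)] by simp
  then have "tF H \<tau>' j < A" using tF_le_length[OF j(1)] long(1) by simp
  then have "tF H \<tau>' j = tZ H X j"
    using tF_eq_tZ_or_late[OF om agree long(2)] by auto
  moreover have "take (tZ H X j) \<tau>' = restr X (tZ H X j)"
    using agree long(2) by (intro restr_eqI) auto
  ultimately show ?thesis by (simp add: nth_Jfin[OF j(2)] JZ_def)
qed

lemma length_Jfin_iterate_le: "length ((Jfin code H ^^ n) \<sigma>) \<le> length \<sigma> - n"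
proof (induction n)
  case (Suc n)
  then show ?case using length_Jfin_le[of code H "(Jfin code H ^^ n) \<sigma>"] by simp
qed simp

lemma Jfin_iterate_Nil_ex: "\<exists>n. (Jfin code H ^^ n) \<sigma> = []"
  using length_Jfin_iterate_le[where n="length \<sigma>" and code=code and H=H and \<sigma>=\<sigma>] by auto

lemma Jfinomega_eqI:
  assumes "\<And>m. m \<le> n \<Longrightarrow> (Jfin code H ^^ m) \<sigma> \<noteq> []" and "(Jfin code H ^^ Suc n) \<sigma> = []"
  shows "Jfinomega code H \<sigma> = map (\<lambda>i. (Jfin code H ^^ Suc i) \<sigma> ! 0) [0..<n]"
proof -
  have "(LEAST k. (Jfin code H ^^ k) \<sigma> = []) = Suc n"
    using assms by (intro Least_equality) (auto simp: not_less_eq_eq[symmetric])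
  then show ?thesis by (simp add: Jfinomega_def)
qed

lemma nth_Jfinomega:
  "i < length (Jfinomega code H \<sigma>) \<Longrightarrow> Jfinomega code H \<sigma> ! i = (Jfin code H ^^ Suc i) \<sigma> ! 0"
  by (simp add: Jfinomega_def del: funpow.simps)

lemma Jfin_iterate_ne_Nil:
  assumes "\<sigma> \<noteq> []" "m \<le> length (Jfinomega code H \<sigma>)"
  shows "(Jfin code H ^^ m) \<sigma> \<noteq> []"
proof -
  define M where "M = (LEAST k. (Jfin code H ^^ k) \<sigma> = [])"
  have "M \<noteq> 0"
  proof
    assume "M = 0"
    then show False
      using LeastI_ex[OF Jfin_iterate_Nil_ex[of code H \<sigma>]] assms(1) by (simp add: M_def)
  qed
  moreover have "length (Jfinomega code H \<sigma>) = M - 1" by (simp add: Jfinomega_def M_def)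
  ultimately have "m < M" using assms(2) by simp
  then show ?thesis using not_less_Least M_def by blast
qed

subsection \<open>From the jump to its finite approximations\<close>

text \<open>
  \<open>jump_prefix_len code H Z k b\<close> is the length of a prefix of \<open>\<J>\<^sup>b(Z)\<close> whose \<open>k\<close>-fold
  \<open>J\<close>-image is the one-element prefix of \<open>\<J>\<^sup>b\<^sup>+\<^sup>k(Z)\<close>.
\<close>

primrec jump_prefix_len ::
  "(nat list \<Rightarrow> nat) \<Rightarrow> (nat \<Rightarrow> nat \<Rightarrow> (nat \<Rightarrow> nat) \<Rightarrow> nat \<Rightarrow> bool) \<Rightarrow> (nat \<Rightarrow> nat) \<Rightarrow> nat \<Rightarrow> nat \<Rightarrow> nat"
where
  "jump_prefix_len code H Z 0 b = 1"
| "jump_prefix_len code H Z (Suc k) b =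
     tZ H ((JZ code H ^^ b) Z) (jump_prefix_len code H Z k (Suc b) - 1)"

lemma jump_prefix_len_ge: "Suc k \<le> jump_prefix_len code H Z k b"
proof (induction k arbitrary: b)
  case (Suc k)
  have "Suc k \<le> jump_prefix_len code H Z k (Suc b)" by (rule Suc.IH)
  then show ?case
    using tZ_ge[of "jump_prefix_len code H Z k (Suc b) - 1" H "(JZ code H ^^ b) Z"] by simp
qed simp

lemma Jfin_iterate_jump_prefix:
  assumes om: "oracle_model code H"
  shows "(Jfin code H ^^ m) (restr ((JZ code H ^^ b) Z) (jump_prefix_len code H Z (m + r) b))
       = restr ((JZ code H ^^ (b + m)) Z) (jump_prefix_len code H Z r (b + m))"
proof (induction m arbitrary: b)
  case (Suc m)
  have len: "Suc (jump_prefix_len code H Z (m + r) (Suc b) - 1) = jump_prefix_len code H Z (m + r) (Suc b)"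
    using jump_prefix_len_ge[of "m + r" code H Z "Suc b"] by simp
  have "Jfin code H (restr ((JZ code H ^^ b) Z) (jump_prefix_len code H Z (Suc m + r) b))
      = restr ((JZ code H ^^ Suc b) Z) (jump_prefix_len code H Z (m + r) (Suc b))"
    using Jfin_restr_tZ[OF om] by (simp only: add_Suc jump_prefix_len.simps len funpow.simps o_apply)
  then show ?case
    using Suc.IH[of "Suc b"] by (simp add: funpow_Suc_right del: funpow.simps)
qed simp

lemma jump_approximations_exist:
  assumes om: "oracle_model code H"
  shows "\<exists>\<sigma>. \<sigma> = restr Z (length \<sigma>) \<and> length \<sigma> > n \<and> restr (JZomega code H Z) n = Jfinomega code H \<sigma>"
proof (intro exI conjI)
  define \<sigma> where "\<sigma> = restr Z (jump_prefix_len code H Z n 0)"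
  have iter: "(Jfin code H ^^ m) \<sigma> = restr ((JZ code H ^^ m) Z) (jump_prefix_len code H Z (n - m) m)"
    if "m \<le> n" for m
    using Jfin_iterate_jump_prefix[OF om, of m 0 Z "n - m"] that by (simp add: \<sigma>_def)
  have "length (Jfin code H ((Jfin code H ^^ n) \<sigma>)) = 0"
    using iter[of n] length_Jfin_le[of code H "(Jfin code H ^^ n) \<sigma>"] by simp
  then have nil: "(Jfin code H ^^ Suc n) \<sigma> = []" by simp
  have "(Jfin code H ^^ m) \<sigma> \<noteq> []" if "m \<le> n" for m
    using iter[OF that] jump_prefix_len_ge[of "n - m" code H Z m] by (auto simp flip: length_0_conv)
  from Jfinomega_eqI[OF this nil]
  have "Jfinomega code H \<sigma> = map (\<lambda>i. (Jfin code H ^^ Suc i) \<sigma> ! 0) [0..<n]" .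
  also have "\<dots> = restr (JZomega code H Z) n"
  proof -
    have "(Jfin code H ^^ Suc i) \<sigma> ! 0 = JZomega code H Z i" if "i < n" for i
      using iter[of "Suc i"] jump_prefix_len_ge[of "n - Suc i" code H Z "Suc i"] that
      by (simp add: JZomega_def del: funpow.simps)
    then show ?thesis by (simp add: restr_def)
  qed
  finally show "restr (JZomega code H Z) n = Jfinomega code H \<sigma>" ..
  show "\<sigma> = restr Z (length \<sigma>)" "length \<sigma> > n"
    using jump_prefix_len_ge[of n code H Z 0] by (auto simp: \<sigma>_def)
qed

subsection \<open>From finite approximations to the jump\<close>

lemma Jfin_iterates_coherent:
  assumes inj: "inj code"
    and ne: "\<And>m n. m \<le> n \<Longrightarrow> (Jfin code H ^^ m) (s n) \<noteq> []"
    and first: "\<And>i n n'. i < n \<Longrightarrow> i < n' \<Longrightarrow>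
      (Jfin code H ^^ Suc i) (s n) ! 0 = (Jfin code H ^^ Suc i) (s n') ! 0"
  shows "m + j < n \<Longrightarrow> m + j < n' \<Longrightarrow>
    j < length ((Jfin code H ^^ m) (s n)) \<and> (Jfin code H ^^ m) (s n) ! j = (Jfin code H ^^ m) (s n') ! j"
proof (induction j arbitrary: m n n')
  case 0
  have len: "0 < length (Jfin code H ((Jfin code H ^^ m) (s n)))"
    "0 < length (Jfin code H ((Jfin code H ^^ m) (s n')))"
    using ne[of "Suc m" n] ne[of "Suc m" n'] 0 by auto
  have "Jfin code H ((Jfin code H ^^ m) (s n)) ! 0 = Jfin code H ((Jfin code H ^^ m) (s n')) ! 0"
    using first[of m n n'] 0 by simp
  from Jfin_nth_eq_imp_nth_eq[OF inj len this, of 0] show ?case by simp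
next
  case (Suc j)
  have len: "j < length (Jfin code H ((Jfin code H ^^ m) (s n)))"
    "j < length (Jfin code H ((Jfin code H ^^ m) (s n')))"
    using Suc.IH[of "Suc m" n n'] Suc.IH[of "Suc m" n' n'] Suc.prems by simp_all
  have "Jfin code H ((Jfin code H ^^ m) (s n)) ! j = Jfin code H ((Jfin code H ^^ m) (s n')) ! j"
    using Suc.IH[of "Suc m" n n'] Suc.prems by simp
  from Jfin_nth_eq_imp_nth_eq[OF inj len this order_refl] show ?case by simp
qed

lemma Jfin_iterates_converge:
  assumes om: "oracle_model code H"
    and coherent: "\<And>m j n n'. m + j < n \<Longrightarrow> m + j < n' \<Longrightarrow>
      j < length ((Jfin code H ^^ m) (s n)) \<and> (Jfin code H ^^ m) (s n) ! j = (Jfin code H ^^ m) (s n') ! j"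
    and approx: "\<And>j n. j < n \<Longrightarrow> s n ! j = Z j"
  shows "m + j < n \<Longrightarrow> (Jfin code H ^^ m) (s n) ! j = (JZ code H ^^ m) Z j"
proof (induction m arbitrary: j n)
  case 0
  then show ?case using approx by simp
next
  case (Suc m)
  let ?T = "\<lambda>n. (Jfin code H ^^ m) (s n)" and ?X = "(JZ code H ^^ m) Z"
  define A where "A = Suc (length (?T n) + tZ H ?X j + n)"
  define n' where "n' = m + A"
  have "A - 1 < length (?T n')" using coherent[of m "A - 1" n' n'] by (simp add: n'_def A_def)
  moreover have "\<forall>k<A. ?T n' ! k = ?X k" using Suc.IH by (simp add: n'_def)
  moreover have "j < length (Jfin code H (?T n))" "j < length (Jfin code H (?T n'))"
    "Jfin code H (?T n) ! j = Jfin code H (?T n') ! j"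
    using coherent[of "Suc m" j n n'] coherent[of "Suc m" j n' n'] Suc.prems
    by (auto simp: n'_def A_def)
  ultimately have "Jfin code H (?T n') ! j = JZ code H ?X j"
    using Jfin_nth_eq_JZ[OF om, of A "?T n'" ?X j "?T n"] by (simp add: A_def)
  with \<open>Jfin code H (?T n) ! j = _\<close> show ?case by simp
qed

lemma JZomega_eq_if_approximations:
  assumes om: "oracle_model code H"
    and s: "\<And>n. s n = restr Z (length (s n))" "\<And>n. length (s n) > n"
      "\<And>n. restr Y n = Jfinomega code H (s n)"
  shows "Y = JZomega code H Z"
proof
  have len: "length (Jfinomega code H (s n)) = n" for n using s(3)[of n] by (metis length_restr)
  have ne: "(Jfin code H ^^ m) (s n) \<noteq> []" if "m \<le> n" for m n
    using Jfin_iterate_ne_Nil[of "s n" m] s(2)[of n] that len by fastforce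
  have Y: "Y i = (Jfin code H ^^ Suc i) (s n) ! 0" if "i < n" for i n
    using nth_Jfinomega[of i code H "s n"] s(3)[of n] nth_restr[OF that, of Y] that len by simp
  have approx: "s n ! j = Z j" if "j < n" for j n
    using s(1,2)[of n] that by (metis nth_restr order.strict_trans)
  have coherent: "j < length ((Jfin code H ^^ m) (s n))
      \<and> (Jfin code H ^^ m) (s n) ! j = (Jfin code H ^^ m) (s n') ! j"
    if "m + j < n" "m + j < n'" for m j n n'
  proof (rule Jfin_iterates_coherent[OF oracle_model_inj[OF om] ne _ that])
    show "(Jfin code H ^^ Suc i) (s n) ! 0 = (Jfin code H ^^ Suc i) (s n') ! 0"
      if "i < n" "i < n'" for i n n'
      using Y[OF that(1)] Y[OF that(2)] by simp
  qed
  fix i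
  have "Y i = (Jfin code H ^^ Suc i) (s (Suc (Suc i))) ! 0" using Y[of i "Suc (Suc i)"] by simp
  also have "\<dots> = (JZ code H ^^ Suc i) Z 0"
    using Jfin_iterates_converge[where s=s and Z=Z, OF om coherent approx, of "Suc i" 0]
    by (simp del: funpow.simps)
  finally show "Y i = JZomega code H Z i" by (simp add: JZomega_def del: funpow.simps)
qed

theorem lemma5p11:
  fixes code :: "nat list \<Rightarrow> nat"
    and H :: "nat \<Rightarrow> nat \<Rightarrow> (nat \<Rightarrow> nat) \<Rightarrow> nat \<Rightarrow> bool"
    and Y Z :: "nat \<Rightarrow> nat"
  assumes "oracle_model code H"
  shows "Y = JZomega code H Z \<longleftrightarrow>
    (\<forall>n. \<exists>\<sigma>. \<sigma> = restr Z (length \<sigma>) \<and> length \<sigma> > n \<and> restr Y n = Jfinomega code H \<sigma>)"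
proof
  assume "Y = JZomega code H Z"
  then show "\<forall>n. \<exists>\<sigma>. \<sigma> = restr Z (length \<sigma>) \<and> length \<sigma> > n \<and> restr Y n = Jfinomega code H \<sigma>"
    using jump_approximations_exist[OF assms] by blast
next
  assume "\<forall>n. \<exists>\<sigma>. \<sigma> = restr Z (length \<sigma>) \<and> length \<sigma> > n \<and> restr Y n = Jfinomega code H \<sigma>"
  then obtain s where "\<And>n. s n = restr Z (length (s n))" "\<And>n. length (s n) > n"
    "\<And>n. restr Y n = Jfinomega code H (s n)"
    by metis
  then show "Y = JZomega code H Z" by (rule JZomega_eq_if_approximations[OF assms])
qed

end
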